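(* Let $q \geq 7$ be a prime power and let $\mathcal{X}$ be a plane curve of degree $q-1$ defined over $\mathbb{F}_q$ without $\mathbb{F}_q$-linear components with $\mathrm{N}_q(\mathcal{X}) = (q-1)^2$. If $k_0 \neq 0$, then $k_0 \geq 2$.
   Context: $\mathcal{X}(\mathbb{F}_q)=\mathcal{X}\cap\mathbb{P}^2(\mathbb{F}_q)$, $\mathrm{N}_q(\mathcal{X})=\#\mathcal{X}(\mathbb{F}_q)$; "without $\mathbb{F}_q$-linear components" means no line defined over $\mathbb{F}_q$ is a component. For $0\le i\le q+1$, $a_i$ is the number of $\mathbb{F}_q$-lines $l$ with $\#(l\cap\mathcal{X}(\mathbb{F}_q))=i$, and $k_0 := \min\{i : a_i \neq 0\}$. *)

theory Defs
  imports "HOL-Library.Cardinality"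
begin

text \<open>Ternary forms over a field: coefficient functions on exponent triples (i,j,k),
  standing for the monomial x^i y^j z^k.\<close>

type_synonym 'a form3 = "nat \<times> nat \<times> nat \<Rightarrow> 'a"

definition mdeg :: "nat \<times> nat \<times> nat \<Rightarrow> nat" where
  "mdeg e = (case e of (i,j,k) \<Rightarrow> i + j + k)"

definition homog_form :: "nat \<Rightarrow> ('a::zero) form3 \<Rightarrow> bool" where
  "homog_form d F \<longleftrightarrow> (\<forall>e. F e \<noteq> 0 \<longrightarrow> mdeg e = d)"

definition eval_form :: "nat \<Rightarrow> ('a::comm_ring_1) form3 \<Rightarrow> 'a \<times> 'a \<times> 'a \<Rightarrow> 'a" where
  "eval_form d F p = (case p of (x,y,z) \<Rightarrow>
     (\<Sum>(i,j,k)\<in>{..d}\<times>{..d}\<times>{..d}. F (i,j,k) * x^i * y^j * z^k))"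

definition mult_form :: "('a::comm_ring_1) form3 \<Rightarrow> 'a form3 \<Rightarrow> 'a form3" where
  "mult_form F G e = (case e of (i,j,k) \<Rightarrow>
     (\<Sum>(a,b,c)\<in>{..i}\<times>{..j}\<times>{..k}. F (a,b,c) * G (i-a, j-b, k-c)))"

definition lin_form :: "('a::zero) \<Rightarrow> 'a \<Rightarrow> 'a \<Rightarrow> 'a form3" where
  "lin_form a b c e = (if e = (1,0,0) then a else if e = (0,1,0) then b
                        else if e = (0,0,1) then c else 0)"

definition has_lin_component :: "nat \<Rightarrow> ('a::comm_ring_1) form3 \<Rightarrow> bool" where
  "has_lin_component d F \<longleftrightarrow>
     (\<exists>a b c G. (a,b,c) \<noteq> (0,0,0) \<and> homog_form (d - 1) G \<and> F = mult_form (lin_form a b c) G)"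

text \<open>Points of the projective plane over a finite field, as normalized representatives
  (first nonzero coordinate equal to 1). Lines use the same normalization of (a,b,c).\<close>
definition P2 :: "('a::field \<times> 'a \<times> 'a) set" where
  "P2 = {(x,y,z). x = 1 \<or> (x = 0 \<and> y = 1) \<or> (x = 0 \<and> y = 0 \<and> z = 1)}"

definition lines2 :: "('a::field \<times> 'a \<times> 'a) set" where
  "lines2 = P2"

definition on_line :: "('a::field \<times> 'a \<times> 'a) \<Rightarrow> 'a \<times> 'a \<times> 'a \<Rightarrow> bool" where
  "on_line l p = (case l of (a,b,c) \<Rightarrow> case p of (x,y,z) \<Rightarrow> a*x + b*y + c*z = 0)"

definition rat_points :: "nat \<Rightarrow> ('a::field) form3 \<Rightarrow> ('a \<times> 'a \<times> 'a) set" where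
  "rat_points d F = {p \<in> P2. eval_form d F p = 0}"

definition Nq :: "nat \<Rightarrow> ('a::field) form3 \<Rightarrow> nat" where
  "Nq d F = card (rat_points d F)"

definition a_count :: "nat \<Rightarrow> ('a::field) form3 \<Rightarrow> nat \<Rightarrow> nat" where
  "a_count d F i = card {l \<in> lines2. card {p \<in> rat_points d F. on_line l p} = i}"

definition k0 :: "nat \<Rightarrow> ('a::{field,finite}) form3 \<Rightarrow> nat" where
  "k0 d F = Min {i \<in> {0..card (UNIV :: 'a set) + 1}. a_count d F i \<noteq> 0}"

end

(*
  Suppose k0 = 1: every F_q-line meets X(F_q), and some F_q-line l meets it in a single
  point P. Choose coordinates in which l is x = 0 and P = (0:0:1). Then the remaining
  (q-1)^2 - 1 = q(q-2) points lie in the chart x = 1, while for each c the slice F(1,c,z) is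
  a nonzero polynomial in z of degree at most q - 2 (a zero slice would give a linear
  component). Hence every slice has exactly q - 2 roots and two non-roots s1, s2, so
  F(1,c,z) (z - s1)(z - s2) is a multiple of z^q - z. Comparing coefficients gives a
  three-term recurrence for the coefficients of F(1,c,z), which are polynomials in c of
  bounded degree; this forces s1 + s2 to be affine and s1 s2 quadratic in c. The
  non-roots therefore form a conic meeting every vertical line twice, which by pigeonhole
  contains an affine line z = z0 + m c. The projective line z = z0 x + m y then misses
  X(F_q), a contradiction.
*)
theory Submission
  imports Defs "HOL-Computational_Algebra.Polynomial" "HOL-Library.Product_Order"
begin

subsection \<open>Coefficient forms and their products\<close>

text \<open>Exponent triples are added, subtracted and ordered componentwise, so \<open>{..e}\<close> is the
  box of exponents below \<open>e\<close>.\<close>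

lemma atMost_triple: "{..(i::nat, j::nat, k::nat)} = {..i} \<times> {..j} \<times> {..k}"
  by auto

lemma finite_atMost_triple [simp]: "finite {..(i::nat, j::nat, k::nat)}"
  by (simp add: atMost_triple)

lemma add_diff_triple: "p \<le> e \<Longrightarrow> p + (e - p) = (e :: nat \<times> nat \<times> nat)"
  by (cases p; cases e) auto

lemma mdeg_add: "mdeg (p + r) = mdeg p + mdeg r"
  by (cases p; cases r) (simp add: mdeg_def)

definition monom3 :: "nat \<times> nat \<times> nat \<Rightarrow> 'a::comm_ring_1 \<times> 'a \<times> 'a \<Rightarrow> 'a" where
  "monom3 e v = (case e of (i,j,k) \<Rightarrow> case v of (x,y,z) \<Rightarrow> x^i * y^j * z^k)"

lemma monom3_simp [simp]: "monom3 (i,j,k) (x,y,z) = x^i * y^j * z^k"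
  by (simp add: monom3_def)

lemma monom3_add: "monom3 (e + f) v = monom3 e v * monom3 f v"
  by (cases e; cases f; cases v) (simp add: power_add mult_ac)

lemma eval_form_atMost: "eval_form d C v = (\<Sum>e\<in>{..(d,d,d)}. C e * monom3 e v)"
  unfolding eval_form_def atMost_triple
  by (cases v) (auto intro!: sum.cong simp: mult.assoc)

lemma eval_form_nested:
  "eval_form d C (x,y,z) = (\<Sum>i\<le>d. (\<Sum>j\<le>d. (\<Sum>k\<le>d. C (i,j,k) * z^k) * y^j) * x^i)"
  unfolding eval_form_def
  by (simp add: sum.cartesian_product[symmetric] sum_distrib_right sum_distrib_left mult_ac)

lemma homog_formD: "homog_form d C \<Longrightarrow> C (i,j,k) \<noteq> 0 \<Longrightarrow> i + j + k = d"
  unfolding homog_form_def mdeg_def by fastforce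

lemma homog_form_support: "homog_form d C \<Longrightarrow> C e \<noteq> 0 \<Longrightarrow> e \<le> (d,d,d)"
  by (cases e) (auto dest: homog_formD)

lemma eval_form_eq_sum:
  assumes C: "homog_form d C" and S: "finite S" "\<And>e. C e \<noteq> 0 \<Longrightarrow> e \<in> S"
  shows "eval_form d C v = (\<Sum>e\<in>S. C e * monom3 e v)"
proof -
  have "eval_form d C v = (\<Sum>e\<in>{e. C e \<noteq> 0}. C e * monom3 e v)"
    unfolding eval_form_atMost
    by (rule sum.mono_neutral_right) (auto intro: homog_form_support[OF C])
  also have "\<dots> = (\<Sum>e\<in>S. C e * monom3 e v)"
    by (rule sum.mono_neutral_left) (use S in auto)
  finally show ?thesis .
qed

lemma mult_form_eq: "mult_form F G e = (\<Sum>p\<in>{..e}. F p * G (e - p))"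
  by (cases e) (auto simp: mult_form_def atMost_triple intro!: sum.cong)

lemma homog_mult_form:
  assumes F: "homog_form m F" and G: "homog_form n G"
  shows "homog_form (m + n) (mult_form F G)"
  unfolding homog_form_def
proof (intro allI impI)
  fix e assume "mult_form F G e \<noteq> 0"
  then obtain p where "p \<le> e" "F p * G (e - p) \<noteq> 0"
    unfolding mult_form_eq by (rule sum.not_neutral_contains_not_neutral) auto
  then have "F p \<noteq> 0" "G (e - p) \<noteq> 0"
    by auto
  then have "mdeg p = m" "mdeg (e - p) = n"
    using F G unfolding homog_form_def by blast+
  then show "mdeg e = m + n"
    using mdeg_add[of p "e - p"] add_diff_triple[OF \<open>p \<le> e\<close>] by simp
qed

lemma eval_mult_form:
  assumes F: "homog_form m F" and G: "homog_form n G"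
  shows "eval_form (m + n) (mult_form F G) v = eval_form m F v * eval_form n G v"
proof -
  define D where "D = (m + n, m + n, m + n)"
  define t where "t = (\<lambda>(p, r). F p * G r * monom3 (p + r) v)"
  have "eval_form (m + n) (mult_form F G) v = (\<Sum>(e, p)\<in>Sigma {..D} atMost. F p * G (e - p) * monom3 e v)"
    unfolding eval_form_atMost mult_form_eq D_def sum_distrib_right by (rule sum.Sigma) auto
  also have "\<dots> = (\<Sum>pr\<in>{(p, r). p + r \<le> D}. t pr)"
    by (rule sum.reindex_bij_witness[where i = "\<lambda>(p, r). (p + r, p)" and j = "\<lambda>(e, p). (p, e - p)"])
       (auto simp: t_def add_diff_triple)
  also have "\<dots> = (\<Sum>pr\<in>{..(m,m,m)} \<times> {..(n,n,n)}. t pr)"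
  proof (rule sum.mono_neutral_right)
    show "finite {(p, r). p + r \<le> D}"
      by (rule finite_subset[of _ "{..D} \<times> {..D}"]) (auto simp: D_def atMost_triple)
    show "{..(m,m,m)} \<times> {..(n,n,n)} \<subseteq> {(p, r). p + r \<le> D}"
      by (auto simp: D_def)
    show "\<forall>pr\<in>{(p, r). p + r \<le> D} - {..(m,m,m)} \<times> {..(n,n,n)}. t pr = 0"
    proof
      fix pr assume "pr \<in> {(p, r). p + r \<le> D} - {..(m,m,m)} \<times> {..(n,n,n)}"
      then have "F (fst pr) = 0 \<or> G (snd pr) = 0"
        using homog_form_support[OF F] homog_form_support[OF G] by (cases pr) auto
      then show "t pr = 0" by (cases pr) (auto simp: t_def)
    qed
  qed
  also have "\<dots> = eval_form m F v * eval_form n G v"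
    unfolding eval_form_atMost sum_product sum.cartesian_product t_def
    by (rule sum.cong) (auto simp: monom3_add mult_ac)
  finally show ?thesis .
qed

subsection \<open>Forms as functions\<close>

definition is_form :: "nat \<Rightarrow> ('a::comm_ring_1 \<times> 'a \<times> 'a \<Rightarrow> 'a) \<Rightarrow> bool" where
  "is_form d \<phi> \<longleftrightarrow> (\<exists>C. homog_form d C \<and> \<phi> = eval_form d C)"

lemma is_form_eval_form: "homog_form d C \<Longrightarrow> is_form d (eval_form d C)"
  unfolding is_form_def by blast

lemma is_form_zero: "is_form d (\<lambda>_. 0 :: 'a::comm_ring_1)"
proof -
  have "eval_form d (\<lambda>_. 0) = (\<lambda>_. 0 :: 'a)"
    by (simp add: fun_eq_iff eval_form_atMost)
  then show ?thesis
    using is_form_eval_form[of d "\<lambda>_. 0 :: 'a"] by (simp add: homog_form_def)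
qed

lemma is_form_add:
  assumes "is_form d \<phi>" "is_form d \<psi>"
  shows "is_form d (\<lambda>v. \<phi> v + \<psi> v)"
proof -
  obtain C C' where C: "homog_form d C" "\<phi> = eval_form d C"
    and C': "homog_form d C'" "\<psi> = eval_form d C'"
    using assms unfolding is_form_def by blast
  have "homog_form d (\<lambda>e. C e + C' e)"
    using C(1) C'(1) unfolding homog_form_def by (metis add.right_neutral)
  moreover have "(\<lambda>v. \<phi> v + \<psi> v) = eval_form d (\<lambda>e. C e + C' e)"
    by (auto simp: C C' eval_form_atMost sum.distrib distrib_right)
  ultimately show ?thesis unfolding is_form_def by blast
qed

lemma is_form_scale: "is_form d \<phi> \<Longrightarrow> is_form d (\<lambda>v. a * \<phi> v)"
proof -
  assume "is_form d \<phi>"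
  then obtain C where C: "homog_form d C" "\<phi> = eval_form d C"
    unfolding is_form_def by blast
  have "homog_form d (\<lambda>e. a * C e)"
    using C(1) unfolding homog_form_def by (metis mult_zero_right)
  moreover have "(\<lambda>v. a * \<phi> v) = eval_form d (\<lambda>e. a * C e)"
    by (auto simp: C eval_form_atMost sum_distrib_left mult_ac)
  ultimately show ?thesis unfolding is_form_def by blast
qed

lemma is_form_sum:
  "finite A \<Longrightarrow> (\<And>a. a \<in> A \<Longrightarrow> is_form d (f a)) \<Longrightarrow> is_form d (\<lambda>v. \<Sum>a\<in>A. f a v)"
  by (induction A rule: finite_induct) (auto intro: is_form_zero is_form_add)

lemma is_form_const: "is_form 0 (\<lambda>_. a)"
proof -
  have "homog_form 0 (\<lambda>e. if e = (0,0,0) then a else 0)"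
    by (auto simp: homog_form_def mdeg_def)
  moreover have "(\<lambda>_. a) = eval_form 0 (\<lambda>e. if e = (0,0,0) then a else 0)"
    by (auto simp: eval_form_def)
  ultimately show ?thesis unfolding is_form_def by blast
qed

lemma is_form_mult:
  assumes "is_form m \<phi>" "is_form n \<psi>"
  shows "is_form (m + n) (\<lambda>v. \<phi> v * \<psi> v)"
proof -
  obtain C C' where C: "homog_form m C" "\<phi> = eval_form m C"
    and C': "homog_form n C'" "\<psi> = eval_form n C'"
    using assms unfolding is_form_def by blast
  then have "(\<lambda>v. \<phi> v * \<psi> v) = eval_form (m + n) (mult_form C C')"
    by (simp add: eval_mult_form fun_eq_iff)
  then show ?thesis
    unfolding is_form_def using homog_mult_form[OF C(1) C'(1)] by blast
qed

lemma is_form_power: "is_form 1 \<phi> \<Longrightarrow> is_form n (\<lambda>v. \<phi> v ^ n)"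
proof (induction n)
  case 0
  then show ?case using is_form_const[of 1] by simp
next
  case (Suc n)
  then show ?case using is_form_mult[of 1 \<phi> n "\<lambda>v. \<phi> v ^ n"] by simp
qed

lemma is_form_homogeneous:
  assumes "is_form d \<phi>"
  shows "\<phi> (s * x, s * y, s * z) = s ^ d * \<phi> (x, y, z)"
proof -
  obtain C where C: "homog_form d C" "\<phi> = eval_form d C"
    using assms unfolding is_form_def by blast
  have "C e * monom3 e (s * x, s * y, s * z) = s ^ d * (C e * monom3 e (x, y, z))" for e
  proof (cases "C e = 0")
    case False
    then have "mdeg e = d" using C(1) unfolding homog_form_def by blast
    then show ?thesis
      by (cases e) (auto simp: mdeg_def power_add power_mult_distrib mult_ac)
  qed simp
  then show ?thesis
    unfolding C(2) eval_form_atMost sum_distrib_left by simp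
qed

definition smult3 :: "'a::comm_ring_1 \<Rightarrow> 'a \<times> 'a \<times> 'a \<Rightarrow> 'a \<times> 'a \<times> 'a" where
  "smult3 s v = (case v of (x,y,z) \<Rightarrow> (s * x, s * y, s * z))"

definition dot3 :: "'a::comm_ring_1 \<times> 'a \<times> 'a \<Rightarrow> 'a \<times> 'a \<times> 'a \<Rightarrow> 'a" where
  "dot3 l v = (case l of (a,b,c) \<Rightarrow> case v of (x,y,z) \<Rightarrow> a * x + b * y + c * z)"

definition lincomb3 ::
  "'a::comm_ring_1 \<times> 'a \<times> 'a \<Rightarrow> 'a \<times> 'a \<times> 'a \<Rightarrow> 'a \<times> 'a \<times> 'a \<Rightarrow> 'a \<times> 'a \<times> 'a \<Rightarrow> 'a \<times> 'a \<times> 'a"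
  where "lincomb3 A B C v = (case v of (x,y,z) \<Rightarrow> smult3 x A + smult3 y B + smult3 z C)"

lemma smult3_simp [simp]: "smult3 s (x,y,z) = (s * x, s * y, s * z)"
  by (simp add: smult3_def)

lemma dot3_simp [simp]: "dot3 (a,b,c) (x,y,z) = a * x + b * y + c * z"
  by (simp add: dot3_def)

lemma lincomb3_simp [simp]:
  "lincomb3 (a1,a2,a3) (b1,b2,b3) (c1,c2,c3) (x,y,z) =
     (x * a1 + y * b1 + z * c1, x * a2 + y * b2 + z * c2, x * a3 + y * b3 + z * c3)"
  by (simp add: lincomb3_def)

lemma lincomb3_rows:
  "lincomb3 A B C v = (dot3 (fst A, fst B, fst C) v, dot3 (fst (snd A), fst (snd B), fst (snd C)) v,
     dot3 (snd (snd A), snd (snd B), snd (snd C)) v)"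
  by (cases A; cases B; cases C; cases v) (simp add: mult_ac)

lemma homog_lin_form: "homog_form 1 (lin_form a b c)"
  by (auto simp: homog_form_def mdeg_def lin_form_def split: if_splits)

lemma eval_lin_form: "eval_form 1 (lin_form a b c) v = dot3 (a,b,c) v"
  by (cases v) (simp add: eval_form_nested lin_form_def)

lemma is_form_dot3: "is_form 1 (dot3 L)"
proof -
  obtain a b c where "L = (a,b,c)" by (cases L)
  then have "dot3 L = eval_form 1 (lin_form a b c)"
    by (intro ext) (simp only: eval_lin_form)
  then show ?thesis
    using is_form_eval_form[OF homog_lin_form] by simp
qed

lemma is_form_monom3:
  assumes "is_form 1 f" "is_form 1 g" "is_form 1 h"
  shows "is_form (mdeg e) (\<lambda>v. monom3 e (f v, g v, h v))"
proof -
  obtain i j k where e: "e = (i,j,k)" by (cases e)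
  have "is_form (i + j + k) (\<lambda>v. f v ^ i * g v ^ j * h v ^ k)"
    using assms by (intro is_form_mult is_form_power)
  then show ?thesis by (simp add: e mdeg_def)
qed

lemma is_form_compose:
  assumes "is_form d \<phi>"
  shows "is_form d (\<lambda>v. \<phi> (lincomb3 A B C v))"
proof -
  obtain D where D: "homog_form d D" "\<phi> = eval_form d D"
    using assms unfolding is_form_def by blast
  have "is_form d (\<lambda>v. D e * monom3 e (lincomb3 A B C v))" for e
  proof (cases "D e = 0")
    case True
    then show ?thesis using is_form_zero by simp
  next
    case False
    then have "mdeg e = d" using D(1) unfolding homog_form_def by blast
    moreover have "is_form (mdeg e) (\<lambda>v. monom3 e (lincomb3 A B C v))"
      unfolding lincomb3_rows by (rule is_form_monom3[OF is_form_dot3 is_form_dot3 is_form_dot3])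
    ultimately show ?thesis by (simp add: is_form_scale)
  qed
  then have "is_form d (\<lambda>v. \<Sum>e\<in>{..(d,d,d)}. D e * monom3 e (lincomb3 A B C v))"
    by (intro is_form_sum) auto
  then show ?thesis
    unfolding D(2) eval_form_atMost .
qed

subsection \<open>Forms of degree less than the field size\<close>

lemma coeff_eq_0_if_sum_powers_vanish:
  fixes a :: "nat \<Rightarrow> 'a::{field,finite}"
  assumes "\<And>x. (\<Sum>i\<le>n. a i * x ^ i) = 0" "n < CARD('a)" "i \<le> n"
  shows "a i = 0"
proof -
  define p where "p = (\<Sum>i\<le>n. monom (a i) i)"
  have "coeff p j = (if j \<le> n then a j else 0)" for j
    by (simp add: p_def coeff_sum coeff_monom)
  moreover have "p = 0"
  proof (rule poly_eqI_degree[of UNIV])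
    show "degree p < card (UNIV :: 'a set)"
      using assms(2) by (intro le_less_trans[OF degree_le]) (auto simp: \<open>\<And>j. coeff p j = _\<close>)
  qed (use assms(1,2) in \<open>auto simp: p_def poly_sum poly_monom\<close>)
  ultimately show ?thesis using assms(3) by (metis coeff_0)
qed

lemma coeff_eq_0_if_partial_eval_vanishes:
  fixes C :: "('a::{field,finite}) form3"
  assumes "\<And>y z. (\<Sum>j\<le>d. (\<Sum>k\<le>d. C (i,j,k) * z ^ k) * y ^ j) = 0" "d < CARD('a)"
    and "j \<le> d" "k \<le> d"
  shows "C (i,j,k) = 0"
proof -
  have "(\<Sum>k\<le>d. C (i,j,k) * z ^ k) = 0" for z
    using coeff_eq_0_if_sum_powers_vanish[of "\<lambda>j. \<Sum>k\<le>d. C (i,j,k) * z ^ k"] assms by blast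
  then show ?thesis
    using coeff_eq_0_if_sum_powers_vanish[of "\<lambda>k. C (i,j,k)"] assms by blast
qed

lemma homog_form_eq_0_if_eval_vanishes:
  fixes C :: "('a::{field,finite}) form3"
  assumes C: "homog_form d C" and d: "d < CARD('a)" and vanish: "\<And>v. eval_form d C v = 0"
  shows "C = (\<lambda>_. 0)"
proof
  fix e :: "nat \<times> nat \<times> nat"
  obtain i j k where e: "e = (i,j,k)" by (cases e)
  show "C e = 0"
  proof (rule ccontr)
    assume "C e \<noteq> 0"
    then have ijk: "i \<le> d" "j \<le> d" "k \<le> d"
      using homog_formD[OF C] by (fastforce simp: e)+
    have "(\<Sum>j\<le>d. (\<Sum>k\<le>d. C (i,j,k) * z ^ k) * y ^ j) = 0" for y z
      using coeff_eq_0_if_sum_powers_vanish[of "\<lambda>i. \<Sum>j\<le>d. (\<Sum>k\<le>d. C (i,j,k) * z ^ k) * y ^ j"]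
        vanish[of "(_, y, z)"] d ijk by (auto simp: eval_form_nested)
    then have "C (i,j,k) = 0"
      using coeff_eq_0_if_partial_eval_vanishes d ijk by blast
    then show False using \<open>C e \<noteq> 0\<close> e by simp
  qed
qed

lemma homog_form_eqI:
  fixes C C' :: "('a::{field,finite}) form3"
  assumes "homog_form d C" "homog_form d C'" "d < CARD('a)"
    and "\<And>v. eval_form d C v = eval_form d C' v"
  shows "C = C'"
proof -
  have "homog_form d (\<lambda>e. C e - C' e)"
    using assms(1,2) unfolding homog_form_def by (metis diff_self)
  moreover have "eval_form d (\<lambda>e. C e - C' e) v = 0" for v
    using assms(4)[of v] by (simp add: eval_form_atMost sum_subtractf left_diff_distrib)
  ultimately have "(\<lambda>e. C e - C' e) = (\<lambda>_. 0)"
    using homog_form_eq_0_if_eval_vanishes assms(3) by blast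
  then show ?thesis by (simp add: fun_eq_iff)
qed

lemma homog_form_shift_x:
  assumes "homog_form d C"
  shows "homog_form (d - 1) (\<lambda>e. C (e + (1,0,0)))"
  unfolding homog_form_def
proof (intro allI impI)
  fix e :: "nat \<times> nat \<times> nat" assume "C (e + (1,0,0)) \<noteq> 0"
  then have "mdeg (e + (1,0,0)) = d" using assms unfolding homog_form_def by blast
  then show "mdeg e = d - 1" by (cases e) (simp add: mdeg_def)
qed

lemma eval_form_factor_x:
  fixes C :: "('a::comm_ring_1) form3"
  assumes C: "homog_form d C" and C0: "\<And>j k. C (0,j,k) = 0"
  shows "eval_form d C v = fst v * eval_form (d - 1) (\<lambda>e. C (e + (1,0,0))) v"
proof -
  define s :: "nat \<times> nat \<times> nat" where "s = (1,0,0)"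
  have support: "e \<in> (\<lambda>e. e + s) ` {..(d,d,d)}" if "C e \<noteq> 0" for e
  proof -
    obtain i j k where e: "e = (i,j,k)" by (cases e)
    have "i \<noteq> 0" using C0 that e by (metis gr_zeroI)
    moreover have "e \<le> (d,d,d)" using homog_form_support[OF C that] .
    ultimately show ?thesis
      by (intro image_eqI[of _ _ "(i - 1, j, k)"]) (auto simp: e s_def)
  qed
  have "eval_form d C v = (\<Sum>e\<in>(\<lambda>e. e + s) ` {..(d,d,d)}. C e * monom3 e v)"
    by (rule eval_form_eq_sum[OF C]) (auto intro: support)
  also have "\<dots> = fst v * (\<Sum>e\<in>{..(d,d,d)}. C (e + s) * monom3 e v)"
    by (cases v) (simp add: sum.reindex inj_on_def monom3_add s_def sum_distrib_left mult_ac)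
  also have "(\<Sum>e\<in>{..(d,d,d)}. C (e + s) * monom3 e v) = eval_form (d - 1) (\<lambda>e. C (e + s)) v"
    by (rule eval_form_eq_sum[OF homog_form_shift_x[OF C, folded s_def], symmetric])
       (auto dest!: homog_formD[OF homog_form_shift_x[OF C, folded s_def]])
  finally show ?thesis by (simp add: s_def)
qed

lemma is_form_divisible_by_x:
  fixes \<phi> :: "('a::{field,finite}) \<times> 'a \<times> 'a \<Rightarrow> 'a"
  assumes \<phi>: "is_form d \<phi>" and d: "d < CARD('a)" and vanish: "\<And>y z. \<phi> (0,y,z) = 0"
  shows "\<exists>\<kappa>. is_form (d - 1) \<kappa> \<and> (\<forall>v. \<phi> v = fst v * \<kappa> v)"
proof -
  obtain C where C: "homog_form d C" "\<phi> = eval_form d C"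
    using \<phi> unfolding is_form_def by blast
  have C0: "C (0,j,k) = 0" for j k
  proof (rule ccontr)
    assume "C (0,j,k) \<noteq> 0"
    then have jk: "j \<le> d" "k \<le> d" using homog_formD[OF C(1)] by fastforce+
    have "(\<Sum>i\<le>d. f i * (0::'a) ^ i) = f 0" for f :: "nat \<Rightarrow> 'a"
      by (induction d) auto
    then have "(\<Sum>j\<le>d. (\<Sum>k\<le>d. C (0,j,k) * z ^ k) * y ^ j) = 0" for y z
      using vanish[of y z] by (simp add: C(2) eval_form_nested)
    then show False
      using coeff_eq_0_if_partial_eval_vanishes[OF _ d jk] \<open>C (0,j,k) \<noteq> 0\<close> by blast
  qed
  show ?thesis
    using eval_form_factor_x[OF C(1) C0] is_form_eval_form[OF homog_form_shift_x[OF C(1)]]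
    unfolding C(2) by blast
qed

definition has_linear_factor :: "nat \<Rightarrow> ('a::comm_ring_1 \<times> 'a \<times> 'a \<Rightarrow> 'a) \<Rightarrow> bool" where
  "has_linear_factor d \<phi> \<longleftrightarrow>
     (\<exists>L \<kappa>. L \<noteq> (0,0,0) \<and> is_form (d - 1) \<kappa> \<and> (\<forall>v. \<phi> v = dot3 L v * \<kappa> v))"

lemma has_lin_component_if_has_linear_factor:
  fixes F :: "('a::{field,finite}) form3"
  assumes F: "homog_form d F" and d: "1 \<le> d" "d < CARD('a)"
    and factor: "has_linear_factor d (eval_form d F)"
  shows "has_lin_component d F"
proof -
  obtain a b c K where L: "(a,b,c) \<noteq> (0,0,0)" and K: "homog_form (d - 1) K"
    and eq: "\<And>v. eval_form d F v = dot3 (a,b,c) v * eval_form (d - 1) K v"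
    using factor unfolding has_linear_factor_def is_form_def by fastforce
  have d1: "1 + (d - 1) = d" using d(1) by simp
  have "homog_form d (mult_form (lin_form a b c) K)"
    using homog_mult_form[OF homog_lin_form K] unfolding d1 .
  moreover have "eval_form d (mult_form (lin_form a b c) K) v = eval_form d F v" for v
    using eval_mult_form[OF homog_lin_form K, of a b c v] unfolding d1 eval_lin_form eq .
  ultimately have "F = mult_form (lin_form a b c) K"
    using homog_form_eqI[OF F _ d(2)] by metis
  then show ?thesis
    unfolding has_lin_component_def using L K by blast
qed

subsection \<open>Changes of coordinates\<close>

lemma lincomb3_smult3: "lincomb3 A B C (smult3 s v) = smult3 s (lincomb3 A B C v)"
  by (cases A; cases B; cases C; cases v) (simp add: algebra_simps)

lemma lincomb3_diff: "lincomb3 A B C (u - v) = lincomb3 A B C u - lincomb3 A B C v"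
  by (cases A; cases B; cases C; cases u; cases v) (simp add: algebra_simps)

lemma lincomb3_lincomb3:
  "lincomb3 R Q P (lincomb3 A B C w) =
     lincomb3 (lincomb3 R Q P A) (lincomb3 R Q P B) (lincomb3 R Q P C) w"
  by (cases R; cases Q; cases P; cases A; cases B; cases C; cases w) (simp add: algebra_simps)

lemma dot3_lincomb3: "dot3 L (lincomb3 A B C w) = dot3 (dot3 L A, dot3 L B, dot3 L C) w"
  by (cases L; cases A; cases B; cases C; cases w) (simp add: algebra_simps)

lemma dot3_smult3: "dot3 L (smult3 s v) = s * dot3 L v"
  by (cases L; cases v) (simp add: algebra_simps)

lemma lincomb3_basis [simp]:
  "lincomb3 A B C (1,0,0) = A" "lincomb3 A B C (0,1,0) = B" "lincomb3 A B C (0,0,1) = C"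
  by (cases A; cases B; cases C; simp)+

lemma lincomb3_eq_0_iff: "lincomb3 A B C v = (0,0,0) \<longleftrightarrow> v = (0,0,0)" if "inj (lincomb3 A B C)"
proof -
  have "lincomb3 A B C (0,0,0) = (0,0,0)"
    by (cases A; cases B; cases C) simp
  then show ?thesis using that by (metis injD)
qed

lemma lincomb3_inverse:
  fixes R Q P :: "('a::{field,finite}) \<times> 'a \<times> 'a"
  assumes "inj (lincomb3 R Q P)"
  obtains A B C where "\<And>w. lincomb3 R Q P (lincomb3 A B C w) = w"
    and "\<And>u. lincomb3 A B C (lincomb3 R Q P u) = u"
proof -
  let ?M = "lincomb3 R Q P"
  have "surj ?M" using assms by (simp add: finite_UNIV_inj_surj)
  then have MN: "?M (inv ?M w) = w" for w by (simp add: surj_f_inv_f)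
  define A B C where "A = inv ?M (1,0,0)" and "B = inv ?M (0,1,0)" and "C = inv ?M (0,0,1)"
  have right: "?M (lincomb3 A B C w) = w" for w
    by (cases w) (simp add: lincomb3_lincomb3 A_def B_def C_def MN)
  moreover have "lincomb3 A B C (?M u) = u" for u
    using right[of "?M u"] assms by (meson injD)
  ultimately show ?thesis using that by blast
qed

lemma independent_on_line:
  fixes L :: "('a::field) \<times> 'a \<times> 'a"
  assumes "L \<noteq> (0,0,0)"
  obtains Q1 Q2 where "dot3 L Q1 = 0" "dot3 L Q2 = 0"
    and "\<And>s t. smult3 s Q1 = smult3 t Q2 \<Longrightarrow> s = 0 \<and> t = 0"
proof -
  obtain a b c where L: "L = (a,b,c)" by (cases L)
  consider "a \<noteq> 0" | "a = 0" "b \<noteq> 0" | "a = 0" "b = 0" "c \<noteq> 0"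
    using assms L by blast
  then show ?thesis
  proof cases
    case 1
    then show ?thesis by (intro that[of "(-b, a, 0)" "(-c, 0, a)"]) (auto simp: L algebra_simps)
  next
    case 2
    then show ?thesis by (intro that[of "(1, 0, 0)" "(0, -c, b)"]) (auto simp: L)
  next
    case 3
    then show ?thesis by (intro that[of "(1, 0, 0)" "(0, 1, 0)"]) (auto simp: L)
  qed
qed

lemma exists_nonzero_on_line:
  fixes L :: "('a::field) \<times> 'a \<times> 'a"
  assumes "L \<noteq> (0,0,0)"
  obtains P where "P \<noteq> (0,0,0)" "dot3 L P = 0"
proof -
  obtain Q1 Q2 where "dot3 L Q1 = 0" "\<And>s t. smult3 s Q1 = smult3 t Q2 \<Longrightarrow> s = 0 \<and> t = 0"
    using independent_on_line[OF assms] by metis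
  moreover have "Q1 \<noteq> (0,0,0)"
    using calculation(2)[of 1 0] by (cases Q1; cases Q2) auto
  ultimately show ?thesis using that by blast
qed

lemma exists_non_multiple_on_line:
  fixes L P :: "('a::field) \<times> 'a \<times> 'a"
  assumes "L \<noteq> (0,0,0)"
  obtains Q where "dot3 L Q = 0" "\<And>s. Q \<noteq> smult3 s P"
proof -
  obtain Q1 Q2 where Q: "dot3 L Q1 = 0" "dot3 L Q2 = 0"
    and indep: "\<And>s t. smult3 s Q1 = smult3 t Q2 \<Longrightarrow> s = 0 \<and> t = 0"
    using independent_on_line[OF assms] by metis
  show ?thesis
  proof (rule ccontr)
    assume "\<not> thesis"
    then have "\<exists>s. Q1 = smult3 s P" "\<exists>t. Q2 = smult3 t P"
      using that Q by blast+
    then obtain s t where "Q1 = smult3 s P" "Q2 = smult3 t P"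
      by blast
    then have "smult3 t Q1 = smult3 s Q2"
      by (cases P) (simp add: mult_ac)
    then have "s = 0" "t = 0" using indep by blast+
    then show False
      using indep[of 1 0] \<open>Q1 = smult3 s P\<close> \<open>Q2 = smult3 t P\<close> by (cases P) simp
  qed
qed

lemma exists_not_on_line:
  fixes L :: "('a::field) \<times> 'a \<times> 'a"
  assumes "L \<noteq> (0,0,0)"
  obtains R where "dot3 L R \<noteq> 0"
proof -
  obtain a b c where L: "L = (a,b,c)" by (cases L)
  then have "dot3 L (1,0,0) \<noteq> 0 \<or> dot3 L (0,1,0) \<noteq> 0 \<or> dot3 L (0,0,1) \<noteq> 0"
    using assms by simp
  then show ?thesis using that by blast
qed

lemma inj_lincomb3:
  fixes R Q P L :: "('a::field) \<times> 'a \<times> 'a"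
  assumes R: "dot3 L R \<noteq> 0" and Q: "dot3 L Q = 0" "\<And>s. Q \<noteq> smult3 s P"
    and P: "dot3 L P = 0" "P \<noteq> (0,0,0)"
  shows "inj (lincomb3 R Q P)"
proof -
  have kernel: "w = (0,0,0)" if "lincomb3 R Q P w = (0,0,0)" for w
  proof -
    obtain x y z where w: "w = (x,y,z)" by (cases w)
    have "x * dot3 L R = dot3 L (lincomb3 R Q P w)"
      by (simp add: dot3_lincomb3 w Q(1) P(1) mult.commute)
    also have "\<dots> = 0"
      using that by (cases L) simp
    finally have "x * dot3 L R = 0" .
    then have x: "x = 0" using R by simp
    have y: "y = 0"
    proof (rule ccontr)
      assume "y \<noteq> 0"
      have "smult3 y Q + smult3 z P = (0,0,0)"
        using that x by (cases Q; cases P; cases R) (simp add: w mult_ac)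
      then have "Q = smult3 (- z / y) P"
        using \<open>y \<noteq> 0\<close> by (cases Q; cases P) (auto simp: field_simps add_eq_0_iff2)
      then show False using Q(2) by blast
    qed
    have "z = 0"
      using that x y P(2) by (cases P; cases Q; cases R) (auto simp: w)
    then show ?thesis using w x y by simp
  qed
  show ?thesis
  proof (rule injI)
    fix u v assume "lincomb3 R Q P u = lincomb3 R Q P v"
    then have "lincomb3 R Q P (u - v) = (0,0,0)"
      by (simp add: lincomb3_diff zero_prod_def)
    then show "u = v" using kernel by (cases u; cases v) fastforce
  qed
qed

lemma exists_frame_for_line:
  fixes L P :: "('a::field) \<times> 'a \<times> 'a"
  assumes "L \<noteq> (0,0,0)" "P \<noteq> (0,0,0)" "dot3 L P = 0"
  obtains R Q where "inj (lincomb3 R Q P)" "dot3 L R \<noteq> 0" "dot3 L Q = 0"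
proof -
  obtain Q where "dot3 L Q = 0" "\<And>s. Q \<noteq> smult3 s P"
    using exists_non_multiple_on_line[OF assms(1)] by metis
  moreover obtain R where "dot3 L R \<noteq> 0"
    using exists_not_on_line[OF assms(1)] by metis
  ultimately show ?thesis
    using that inj_lincomb3 assms(2,3) by metis
qed

subsection \<open>Linear factors\<close>

lemma pullback_line_nonzero:
  fixes L :: "('a::field) \<times> 'a \<times> 'a"
  assumes "surj (lincomb3 A B C)" "L \<noteq> (0,0,0)"
  shows "(dot3 L A, dot3 L B, dot3 L C) \<noteq> (0,0,0)"
proof
  assume L': "(dot3 L A, dot3 L B, dot3 L C) = (0,0,0)"
  obtain u where u: "dot3 L u \<noteq> 0" using exists_not_on_line[OF assms(2)] by metis
  obtain w where "u = lincomb3 A B C w" using assms(1) by (metis surjD)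
  then have "dot3 L u = 0"
    using L' by (cases w) (simp add: dot3_lincomb3)
  then show False using u by simp
qed

lemma has_linear_factor_if_compose:
  fixes \<phi> :: "('a::{field,finite}) \<times> 'a \<times> 'a \<Rightarrow> 'a"
  assumes M: "inj (lincomb3 A B C)" and factor: "has_linear_factor d (\<lambda>v. \<phi> (lincomb3 A B C v))"
  shows "has_linear_factor d \<phi>"
proof -
  obtain L \<kappa> where L: "L \<noteq> (0,0,0)" and \<kappa>: "is_form (d - 1) \<kappa>"
    and eq: "\<And>v. \<phi> (lincomb3 A B C v) = dot3 L v * \<kappa> v"
    using factor unfolding has_linear_factor_def by blast
  obtain A' B' C' where MN: "\<And>w. lincomb3 A B C (lincomb3 A' B' C' w) = w"
    and NM: "\<And>u. lincomb3 A' B' C' (lincomb3 A B C u) = u"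
    using lincomb3_inverse[OF M] by metis
  define L' where "L' = (dot3 L A', dot3 L B', dot3 L C')"
  have "\<phi> w = dot3 L' w * \<kappa> (lincomb3 A' B' C' w)" for w
    using eq[of "lincomb3 A' B' C' w"] by (simp add: MN L'_def dot3_lincomb3)
  moreover have "L' \<noteq> (0,0,0)"
    unfolding L'_def by (rule pullback_line_nonzero[OF _ L]) (metis NM surjI)
  ultimately show ?thesis
    unfolding has_linear_factor_def using is_form_compose[OF \<kappa>] by blast
qed

lemma has_linear_factor_if_vanishes_on_line:
  fixes \<phi> :: "('a::{field,finite}) \<times> 'a \<times> 'a \<Rightarrow> 'a"
  assumes \<phi>: "is_form d \<phi>" and d: "d < CARD('a)" and L: "L \<noteq> (0,0,0)"
    and vanish: "\<And>v. dot3 L v = 0 \<Longrightarrow> \<phi> v = 0"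
  shows "has_linear_factor d \<phi>"
proof -
  obtain P where P: "P \<noteq> (0,0,0)" "dot3 L P = 0"
    using exists_nonzero_on_line[OF L] by metis
  obtain R Q where M: "inj (lincomb3 R Q P)" and "dot3 L Q = 0"
    using exists_frame_for_line[OF L P] by metis
  then have "\<phi> (lincomb3 R Q P (0,y,z)) = 0" for y z
    by (intro vanish) (simp add: dot3_lincomb3 P(2))
  then obtain \<kappa> where "is_form (d - 1) \<kappa>" "\<forall>v. \<phi> (lincomb3 R Q P v) = fst v * \<kappa> v"
    using is_form_divisible_by_x[OF is_form_compose[OF \<phi>] d] by blast
  moreover have "dot3 (1,0,0) v = fst v" for v :: "'a \<times> 'a \<times> 'a"
    by (cases v) simp
  ultimately have "has_linear_factor d (\<lambda>v. \<phi> (lincomb3 R Q P v))"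
    unfolding has_linear_factor_def by (intro exI[of _ "(1,0,0)"] exI[of _ \<kappa>]) auto
  then show ?thesis
    by (rule has_linear_factor_if_compose[OF M])
qed

subsection \<open>Projective points\<close>

definition proj_rep :: "('a::field) \<times> 'a \<times> 'a \<Rightarrow> 'a \<times> 'a \<times> 'a" where
  "proj_rep v = (case v of (x,y,z) \<Rightarrow>
     if x \<noteq> 0 then smult3 (inverse x) v else if y \<noteq> 0 then smult3 (inverse y) v
     else smult3 (inverse z) v)"

lemma P2_nonzero: "p \<in> P2 \<Longrightarrow> p \<noteq> (0,0,0)"
  by (auto simp: P2_def)

lemma proj_rep_in_P2: "v \<noteq> (0,0,0) \<Longrightarrow> proj_rep v \<in> P2"
  by (cases v) (auto simp: proj_rep_def P2_def field_simps)

lemma proj_rep_id: "p \<in> P2 \<Longrightarrow> proj_rep p = p"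
  by (cases p) (auto simp: proj_rep_def P2_def)

lemma proj_rep_eq_smult3: "\<exists>s. s \<noteq> 0 \<and> proj_rep v = smult3 s v"
proof -
  obtain x y z where v: "v = (x,y,z)" by (cases v)
  consider "x \<noteq> 0" | "x = 0" "y \<noteq> 0" | "x = 0" "y = 0" "z \<noteq> 0" | "v = (0,0,0)"
    using v by blast
  then show ?thesis
  proof cases
    case 1
    then show ?thesis by (intro exI[of _ "inverse x"]) (simp add: proj_rep_def v)
  next
    case 2
    then show ?thesis by (intro exI[of _ "inverse y"]) (simp add: proj_rep_def v)
  next
    case 3
    then show ?thesis by (intro exI[of _ "inverse z"]) (simp add: proj_rep_def v)
  next
    case 4
    then show ?thesis by (intro exI[of _ 1]) (simp add: proj_rep_def)
  qed
qed

lemma P2_eq_if_proportional: "p \<in> P2 \<Longrightarrow> p' \<in> P2 \<Longrightarrow> p = smult3 s p' \<Longrightarrow> p = p'"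
  by (cases p; cases p') (auto simp: P2_def)

lemma is_form_smult3_eq_0_iff:
  fixes \<phi> :: "('a::field) \<times> 'a \<times> 'a \<Rightarrow> 'a"
  assumes "is_form d \<phi>" "s \<noteq> 0"
  shows "\<phi> (smult3 s v) = 0 \<longleftrightarrow> \<phi> v = 0"
  using is_form_homogeneous[OF assms(1), of s] assms(2) by (cases v) simp

lemma bij_betw_proj_map:
  fixes A B C :: "('a::{field,finite}) \<times> 'a \<times> 'a"
  assumes M: "inj (lincomb3 A B C)"
  shows "bij_betw (\<lambda>p. proj_rep (lincomb3 A B C p)) P2 P2"
proof -
  let ?\<beta> = "\<lambda>p. proj_rep (lincomb3 A B C p)"
  have into: "?\<beta> p \<in> P2" if "p \<in> P2" for p
    using proj_rep_in_P2 lincomb3_eq_0_iff[OF M] P2_nonzero[OF that] by metis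
  have "inj_on ?\<beta> P2"
  proof (rule inj_onI)
    fix p p' assume p: "p \<in> P2" "p' \<in> P2" and eq: "?\<beta> p = ?\<beta> p'"
    obtain s t where "s \<noteq> 0" "t \<noteq> 0" "smult3 s (lincomb3 A B C p) = smult3 t (lincomb3 A B C p')"
      using proj_rep_eq_smult3 eq by metis
    then have "lincomb3 A B C p = smult3 (t / s) (lincomb3 A B C p')"
      by (cases "lincomb3 A B C p"; cases "lincomb3 A B C p'") (simp add: field_simps)
    then have "lincomb3 A B C p = lincomb3 A B C (smult3 (t / s) p')"
      by (simp add: lincomb3_smult3)
    then show "p = p'"
      using M p P2_eq_if_proportional by (metis injD)
  qed
  moreover have "?\<beta> ` P2 = P2"
    using calculation into by (intro endo_inj_surj) auto
  ultimately show ?thesis unfolding bij_betw_def by blast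
qed

lemma is_form_proj_rep_eq_0_iff:
  fixes \<phi> :: "('a::field) \<times> 'a \<times> 'a \<Rightarrow> 'a"
  assumes "is_form d \<phi>"
  shows "\<phi> (proj_rep v) = 0 \<longleftrightarrow> \<phi> v = 0"
  using proj_rep_eq_smult3[of v] is_form_smult3_eq_0_iff[OF assms] by metis

definition meets_every_line :: "(('a::field) \<times> 'a \<times> 'a \<Rightarrow> 'a) \<Rightarrow> bool" where
  "meets_every_line \<phi> \<longleftrightarrow> (\<forall>L. L \<noteq> (0,0,0) \<longrightarrow> (\<exists>p\<in>P2. dot3 L p = 0 \<and> \<phi> p = 0))"

lemma meets_every_line_compose:
  fixes \<phi> :: "('a::{field,finite}) \<times> 'a \<times> 'a \<Rightarrow> 'a"
  assumes \<phi>: "is_form d \<phi>" and M: "inj (lincomb3 A B C)" and meets: "meets_every_line \<phi>"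
  shows "meets_every_line (\<lambda>v. \<phi> (lincomb3 A B C v))"
  unfolding meets_every_line_def
proof (intro allI impI)
  fix L :: "'a \<times> 'a \<times> 'a" assume L: "L \<noteq> (0,0,0)"
  obtain A' B' C' where MN: "\<And>w. lincomb3 A B C (lincomb3 A' B' C' w) = w"
    and NM: "\<And>u. lincomb3 A' B' C' (lincomb3 A B C u) = u"
    using lincomb3_inverse[OF M] by metis
  have "surj (lincomb3 A' B' C')" by (metis NM surjI)
  then obtain p' where p': "p' \<in> P2" "dot3 (dot3 L A', dot3 L B', dot3 L C') p' = 0" "\<phi> p' = 0"
    using meets pullback_line_nonzero[OF _ L] unfolding meets_every_line_def by blast
  define p where "p = proj_rep (lincomb3 A' B' C' p')"
  obtain s where s: "s \<noteq> 0" "p = smult3 s (lincomb3 A' B' C' p')"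
    using proj_rep_eq_smult3 p_def by metis
  have "p \<in> P2"
    unfolding p_def using P2_nonzero[OF p'(1)]
    by (metis MN lincomb3_eq_0_iff[OF M] proj_rep_in_P2)
  moreover have "dot3 L p = 0"
    using p'(2) by (simp add: s(2) dot3_smult3 dot3_lincomb3)
  moreover have "\<phi> (lincomb3 A B C p) = 0"
    using p'(3) is_form_smult3_eq_0_iff[OF \<phi> s(1)] by (simp add: s(2) lincomb3_smult3 MN)
  ultimately show "\<exists>p\<in>P2. dot3 L p = 0 \<and> \<phi> (lincomb3 A B C p) = 0" by blast
qed

lemma card_zeros_compose:
  fixes \<phi> :: "('a::{field,finite}) \<times> 'a \<times> 'a \<Rightarrow> 'a"
  assumes \<phi>: "is_form d \<phi>" and M: "inj (lincomb3 A B C)"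
  shows "card {p\<in>P2. \<phi> (lincomb3 A B C p) = 0} = card {p\<in>P2. \<phi> p = 0}"
proof -
  let ?\<beta> = "\<lambda>p. proj_rep (lincomb3 A B C p)"
  have \<beta>: "bij_betw ?\<beta> P2 P2" by (rule bij_betw_proj_map[OF M])
  have zero_iff: "\<phi> (?\<beta> p) = 0 \<longleftrightarrow> \<phi> (lincomb3 A B C p) = 0" for p
    by (rule is_form_proj_rep_eq_0_iff[OF \<phi>])
  have "?\<beta> ` {p\<in>P2. \<phi> (lincomb3 A B C p) = 0} = {p\<in>P2. \<phi> p = 0}"
  proof (intro equalityI subsetI)
    fix q assume "q \<in> ?\<beta> ` {p\<in>P2. \<phi> (lincomb3 A B C p) = 0}"
    then show "q \<in> {p\<in>P2. \<phi> p = 0}"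
      using bij_betw_apply[OF \<beta>] zero_iff by blast
  next
    fix q assume q: "q \<in> {p\<in>P2. \<phi> p = 0}"
    then obtain p where "p \<in> P2" "q = ?\<beta> p"
      using bij_betw_imp_surj_on[OF \<beta>] by blast
    then show "q \<in> ?\<beta> ` {p\<in>P2. \<phi> (lincomb3 A B C p) = 0}"
      using q zero_iff by blast
  qed
  moreover have "inj_on ?\<beta> {p\<in>P2. \<phi> (lincomb3 A B C p) = 0}"
    using bij_betw_imp_inj_on[OF \<beta>] by (rule inj_on_subset) blast
  ultimately show ?thesis
    using card_image by fastforce
qed

lemma on_line_iff_dot3: "on_line l p \<longleftrightarrow> dot3 l p = 0"
  by (cases l; cases p) (simp add: on_line_def)

lemma single_point_line_pullback:
  fixes F :: "('a::{field,finite}) form3"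
  assumes F: "homog_form d F" and M: "inj (lincomb3 R Q P)"
    and l: "dot3 l Q = 0" "dot3 l P = 0" and P: "P \<in> P2"
    and single: "{p \<in> rat_points d F. on_line l p} = {P}"
  shows "eval_form d F (lincomb3 R Q P (0,1,z)) \<noteq> 0"
proof
  assume zero: "eval_form d F (lincomb3 R Q P (0,1,z)) = 0"
  let ?\<beta> = "\<lambda>p. proj_rep (lincomb3 R Q P p)"
  have \<beta>: "bij_betw ?\<beta> P2 P2" by (rule bij_betw_proj_map[OF M])
  have in_P2: "(0,1,z) \<in> P2" "(0,0,1) \<in> P2" by (simp_all add: P2_def)
  obtain s where s: "?\<beta> (0,1,z) = smult3 s (lincomb3 R Q P (0,1,z))"
    using proj_rep_eq_smult3 by metis
  have "dot3 l (?\<beta> (0,1,z)) = 0"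
    by (simp add: s dot3_smult3 dot3_lincomb3 l)
  moreover have "eval_form d F (?\<beta> (0,1,z)) = 0"
    using zero is_form_proj_rep_eq_0_iff[OF is_form_eval_form[OF F]] by simp
  ultimately have "?\<beta> (0,1,z) \<in> {p \<in> rat_points d F. on_line l p}"
    using bij_betw_apply[OF \<beta> in_P2(1)] by (simp add: rat_points_def on_line_iff_dot3)
  then have "?\<beta> (0,1,z) = ?\<beta> (0,0,1)"
    using single proj_rep_id[OF P] by simp
  then show False
    using inj_onD[OF bij_betw_imp_inj_on[OF \<beta>] _ in_P2] by simp
qed

lemma normalize_line_with_single_point:
  fixes F :: "('a::{field,finite}) form3"
  assumes F: "homog_form d F" and d: "1 \<le> d" "d < CARD('a)"
    and no_lin: "\<not> has_lin_component d F" and meets: "meets_every_line (eval_form d F)"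
    and l: "l \<in> lines2" and single: "{p \<in> rat_points d F. on_line l p} = {P}"
  obtains \<phi> :: "'a \<times> 'a \<times> 'a \<Rightarrow> 'a"
    where "is_form d \<phi>" "card {p\<in>P2. \<phi> p = 0} = Nq d F"
    "meets_every_line \<phi>" "\<not> has_linear_factor d \<phi>"
    "\<phi> (0,0,1) = 0" "\<And>z. \<phi> (0,1,z) \<noteq> 0"
proof -
  have l0: "l \<noteq> (0,0,0)" using l P2_nonzero by (simp add: lines2_def)
  have P: "P \<in> P2" "eval_form d F P = 0" "dot3 l P = 0"
    using single by (auto simp: rat_points_def on_line_iff_dot3)
  obtain R Q where M: "inj (lincomb3 R Q P)" and Q: "dot3 l Q = 0"
    using exists_frame_for_line[OF l0 P2_nonzero[OF P(1)] P(3)] by metis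
  define \<phi> where "\<phi> v = eval_form d F (lincomb3 R Q P v)" for v
  have \<phi>: "is_form d \<phi>"
    unfolding \<phi>_def using is_form_compose is_form_eval_form[OF F] by blast
  have "card {p\<in>P2. \<phi> p = 0} = Nq d F"
    unfolding \<phi>_def Nq_def rat_points_def
    using card_zeros_compose[OF is_form_eval_form[OF F] M] .
  moreover have "meets_every_line \<phi>"
    unfolding \<phi>_def using meets_every_line_compose[OF is_form_eval_form[OF F] M meets] .
  moreover have "\<not> has_linear_factor d \<phi>"
    using has_linear_factor_if_compose[OF M] has_lin_component_if_has_linear_factor[OF F d]
      no_lin unfolding \<phi>_def by blast
  moreover have "\<phi> (0,0,1) = 0"
    using P(2) by (simp add: \<phi>_def)
  moreover have "\<phi> (0,1,z) \<noteq> 0" for z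
    unfolding \<phi>_def using single_point_line_pullback[OF F M Q P(3) P(1) single] .
  ultimately show ?thesis using that[OF \<phi>] by blast
qed

subsection \<open>Polynomials over a finite field\<close>

lemma power_card_eq_self:
  fixes x :: "'a::{field,finite}"
  shows "x ^ CARD('a) = x"
proof (cases "x = 0")
  case False
  let ?U = "UNIV - {0::'a}"
  have "bij_betw (\<lambda>y. x * y) ?U ?U"
    by (rule bij_betw_byWitness[where f' = "\<lambda>y. inverse x * y"]) (use False in auto)
  then have "(\<Prod>y\<in>?U. x * y) = (\<Prod>y\<in>?U. y)"
    using prod.reindex_bij_betw[of "\<lambda>y. x * y" ?U ?U "\<lambda>y. y"] by simp
  moreover have "(\<Prod>y\<in>?U. x * y) = x ^ card ?U * (\<Prod>y\<in>?U. y)"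
    by (simp add: prod.distrib)
  moreover have "(\<Prod>y\<in>?U. y) \<noteq> 0" by simp
  ultimately have "x ^ card ?U = 1" by simp
  moreover have "CARD('a) = Suc (card ?U)"
    using card_gt_0_iff[of "UNIV :: 'a set"] by (simp add: card_Diff_singleton)
  ultimately show ?thesis by (metis mult.right_neutral power_Suc)
qed (simp add: zero_power)

lemma poly_eq_sum_upto:
  fixes p :: "'a::comm_ring_1 poly"
  assumes "degree p \<le> n"
  shows "poly p x = (\<Sum>i\<le>n. coeff p i * x ^ i)"
  unfolding poly_altdef
  by (rule sum.mono_neutral_left) (use assms in \<open>auto simp: coeff_eq_0\<close>)

lemma coeff_mult_quadratic:
  "coeff (p * [:a, b, c:]) (Suc (Suc n)) = a * coeff p (n + 2) + b * coeff p (n + 1) + c * coeff p n"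
  by (subst mult.commute) (simp add: algebra_simps)

lemma poly_two_nonroots_mult_eq:
  fixes f :: "'a::{field,finite} poly"
  assumes deg: "degree f \<le> CARD('a) - 2" and nonroots: "{z. poly f z \<noteq> 0} = {s1, s2}"
    and "s1 \<noteq> s2"
  shows "f * [:s1 * s2, - (s1 + s2), 1:] =
    smult (coeff f (CARD('a) - 2)) (monom 1 (CARD('a)) - monom 1 1)"
proof -
  define m where "m = CARD('a) - 2"
  have "2 \<le> CARD('a)"
    using card_mono[of UNIV "{s1, s2}"] \<open>s1 \<noteq> s2\<close> by simp
  then have q: "CARD('a) = m + 2" by (simp add: m_def)
  define g where "g = [:s1 * s2, - (s1 + s2), 1:]"
  have "poly g z = (z - s1) * (z - s2)" for z
    by (simp add: g_def algebra_simps)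
  then have vanish: "poly f z * poly g z = 0" for z
    using nonroots by (cases "poly f z = 0") auto
  have "coeff f (m + 2) = 0" "coeff f (m + 1) = 0"
    using deg by (simp_all add: coeff_eq_0 m_def)
  then have top: "coeff (f * g) (m + 2) = coeff f m"
    using coeff_mult_quadratic[of f "s1 * s2" "- (s1 + s2)" 1 m] by (simp add: g_def)
  \<comment> \<open>both sides have degree at most q and vanish on the whole field, since z^q = z\<close>
  have "f * g = smult (coeff f m) (monom 1 (m + 2) - monom 1 1)"
  proof (rule poly_eqI_degree_lead_coeff[where n = "m + 2" and A = UNIV])
    show "degree (f * g) \<le> m + 2"
      using degree_mult_le[of f g] deg by (simp add: g_def m_def)
    show "degree (smult (coeff f m) (monom 1 (m + 2) - monom 1 1)) \<le> m + 2"
      by (intro order.trans[OF degree_smult_le] degree_diff_le) (auto simp: degree_monom_eq)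
    show "poly (f * g) z = poly (smult (coeff f m) (monom 1 (m + 2) - monom 1 1)) z" for z
    proof -
      have "z ^ (m + 2) = z" using power_card_eq_self[of z] unfolding q .
      then show ?thesis
        by (simp only: poly_mult poly_smult poly_diff poly_monom vanish) simp
    qed
  qed (use top in \<open>simp_all add: coeff_monom q\<close>)
  then show ?thesis by (simp only: g_def q add_diff_cancel_right')
qed

lemma poly_with_two_nonroots:
  fixes f :: "'a::{field,finite} poly"
  assumes "degree f \<le> CARD('a) - 2" and nonroots: "{z. poly f z \<noteq> 0} = {s1, s2}"
    and "s1 \<noteq> s2"
  shows "coeff f (CARD('a) - 2) \<noteq> 0"
    and "\<And>n. n + 2 < CARD('a) \<Longrightarrow>
           s1 * s2 * coeff f (n + 2) - (s1 + s2) * coeff f (n + 1) + coeff f n = 0"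
proof -
  define g where "g = [:s1 * s2, - (s1 + s2), 1:]"
  note identity = poly_two_nonroots_mult_eq[OF assms, folded g_def]
  show "coeff f (CARD('a) - 2) \<noteq> 0"
  proof
    assume "coeff f (CARD('a) - 2) = 0"
    then have "f * g = 0" using identity by simp
    moreover have "g \<noteq> 0" by (simp add: g_def)
    ultimately have "f = 0" by simp
    then show False using nonroots by auto
  qed
  fix n assume "n + 2 < CARD('a)"
  then have "coeff (f * g) (Suc (Suc n)) = 0"
    by (simp add: identity coeff_monom)
  then show "s1 * s2 * coeff f (n + 2) - (s1 + s2) * coeff f (n + 1) + coeff f n = 0"
    by (simp add: g_def coeff_mult_quadratic algebra_simps)
qed

lemma linear_poly_without_roots:
  fixes p :: "'a::field poly"
  assumes "degree p \<le> 1" "\<And>c. poly p c \<noteq> 0"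
  shows "p = [:coeff p 0:]"
proof -
  have p: "poly p c = coeff p 0 + coeff p 1 * c" for c
    using poly_eq_sum_upto[OF assms(1)] by simp
  have "coeff p 1 = 0"
  proof (rule ccontr)
    assume "coeff p 1 \<noteq> 0"
    then have "poly p (- coeff p 0 / coeff p 1) = 0" by (simp add: p)
    then show False using assms(2) by blast
  qed
  then have "degree p \<noteq> 1"
    using leading_coeff_0_iff[of p] by fastforce
  then have "degree p = 0"
    using assms(1) by linarith
  then show ?thesis by (simp add: degree_0_id)
qed

lemma degree_le_1_if_cubic_relation:
  fixes B1 B2 B3 :: "'a::{field,finite} poly"
  assumes q: "CARD('a) > 6" and deg: "degree B1 \<le> 2" "degree B2 \<le> 3" "degree B3 \<le> 4"
    and rel: "\<And>c. poly B1 c ^ 3 = \<beta> * poly B1 c * poly B2 c + \<gamma> * poly B3 c"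
  shows "degree B1 \<le> 1"
proof -
  have deg5: "degree (smult \<beta> (B1 * B2) + smult \<gamma> B3) \<le> 5"
    using degree_mult_le[of B1 B2] deg by (intro degree_add_le) auto
  have "B1 ^ 3 = smult \<beta> (B1 * B2) + smult \<gamma> B3"
  proof (rule poly_eqI_degree[of UNIV])
    show "poly (B1 ^ 3) c = poly (smult \<beta> (B1 * B2) + smult \<gamma> B3) c" for c
      using rel[of c] by (simp add: mult.assoc)
    show "degree (B1 ^ 3) < card (UNIV :: 'a set)"
      using degree_power_le[of B1 3] deg q by simp
  qed (use deg5 q in simp)
  then show ?thesis
    using deg5 degree_power_eq[of B1 3] by (cases "B1 = 0") auto
qed

lemma degree_le_2_if_quadratic_relation:
  fixes B1 B2 B3 B4 :: "'a::{field,finite} poly"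
  assumes q: "CARD('a) > 6"
    and deg: "degree B1 \<le> 1" "degree B2 \<le> 3" "degree B3 \<le> 4" "degree B4 \<le> 5"
    and rel: "\<And>c. poly B2 c ^ 2 =
      \<beta> * poly B1 c ^ 2 * poly B2 c + \<gamma> * poly B1 c * poly B3 c + \<delta> * poly B4 c"
  shows "degree B2 \<le> 2"
proof -
  have "degree (B1 ^ 2 * B2) \<le> 5" "degree (B1 * B3) \<le> 5"
    using degree_mult_le[of "B1 ^ 2" B2] degree_power_le[of B1 2] degree_mult_le[of B1 B3] deg
    by linarith+
  then have deg5: "degree (smult \<beta> (B1 ^ 2 * B2) + smult \<gamma> (B1 * B3) + smult \<delta> B4) \<le> 5"
    using deg by (intro degree_add_le) auto
  have "B2 ^ 2 = smult \<beta> (B1 ^ 2 * B2) + smult \<gamma> (B1 * B3) + smult \<delta> B4"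
  proof (rule poly_eqI_degree[of UNIV])
    show "poly (B2 ^ 2) c = poly (smult \<beta> (B1 ^ 2 * B2) + smult \<gamma> (B1 * B3) + smult \<delta> B4) c" for c
      using rel[of c] by (simp add: mult.assoc)
    show "degree (B2 ^ 2) < card (UNIV :: 'a set)"
      using degree_power_le[of B2 2] deg q by simp
  qed (use deg5 q in simp)
  then show ?thesis
    using deg5 degree_power_eq[of B2 2] by (cases "B2 = 0") auto
qed

text \<open>Eliminating \<open>U\<close> and \<open>V\<close> from the first four steps of the recurrence gives identities
  whose top coefficients vanish only if \<open>B1\<close> is affine and \<open>B2\<close> quadratic.\<close>

lemma recurrence_coefficients_low_degree:
  fixes B1 B2 B3 B4 :: "'a::{field,finite} poly"
  assumes q: "CARD('a) > 6" and \<alpha>: "\<alpha> \<noteq> 0"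
    and deg: "degree B1 \<le> 2" "degree B2 \<le> 3" "degree B3 \<le> 4" "degree B4 \<le> 5"
    and rec1: "\<And>c. poly B1 c = U c * \<alpha>"
    and rec2: "\<And>c. poly B2 c = U c * poly B1 c - V c * \<alpha>"
    and rec3: "\<And>c. poly B3 c = U c * poly B2 c - V c * poly B1 c"
    and rec4: "\<And>c. poly B4 c = U c * poly B3 c - V c * poly B2 c"
  obtains u0 u1 v0 v1 v2 where "\<And>c. U c = u0 + u1 * c" "\<And>c. V c = v0 + v1 * c + v2 * c\<^sup>2"
proof -
  have U: "U c = poly B1 c / \<alpha>" for c using rec1 \<alpha> by simp
  have V: "V c = (U c * poly B1 c - poly B2 c) / \<alpha>" for c using rec2 \<alpha> by (simp add: field_simps)
  have "poly B1 c ^ 3 = (2 * \<alpha>) * poly B1 c * poly B2 c + (- \<alpha>\<^sup>2) * poly B3 c" for c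
    using \<alpha> by (simp add: rec3 V U field_simps power2_eq_square power3_eq_cube)
  then have deg1: "degree B1 \<le> 1"
    using degree_le_1_if_cubic_relation[OF q deg(1-3)] by blast
  have "poly B2 c ^ 2 = inverse \<alpha> * poly B1 c ^ 2 * poly B2 c + (- 1) * poly B1 c * poly B3 c
      + \<alpha> * poly B4 c" for c
    using \<alpha> by (simp add: rec4 rec3 V U field_simps power2_eq_square power3_eq_cube)
  then have deg2: "degree B2 \<le> 2"
    using degree_le_2_if_quadratic_relation[OF q deg1 deg(2-4)] by blast
  let ?a = "\<lambda>i. coeff B1 i" and ?b = "\<lambda>i. coeff B2 i"
  have B1: "poly B1 c = ?a 0 + ?a 1 * c" and B2: "poly B2 c = ?b 0 + ?b 1 * c + ?b 2 * c\<^sup>2" for c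
    using poly_eq_sum_upto[OF deg1] poly_eq_sum_upto[OF deg2] by (simp_all add: numeral_2_eq_2)
  show ?thesis
  proof (rule that)
    show "U c = ?a 0 / \<alpha> + ?a 1 / \<alpha> * c" for c
      by (simp add: U B1 add_divide_distrib)
    show "V c = (?a 0 * ?a 0 / \<alpha> - ?b 0) / \<alpha> + (2 * ?a 0 * ?a 1 / \<alpha> - ?b 1) / \<alpha> * c
        + (?a 1 * ?a 1 / \<alpha> - ?b 2) / \<alpha> * c\<^sup>2" for c
      using \<alpha> by (simp add: V U B1 B2 field_simps power2_eq_square)
  qed
qed

lemma conic_contains_line:
  fixes u0 u1 v0 v1 v2 :: "'a::{field,finite}"
  defines "S \<equiv> \<lambda>c z. z\<^sup>2 - (u0 + u1 * c) * z + (v0 + v1 * c + v2 * c\<^sup>2)"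
  assumes q: "CARD('a) \<ge> 3" and two: "\<And>c. card {z. S c z = 0} = 2"
  obtains z0 m where "\<And>c. S c (z0 + m * c) = 0"
proof -
  obtain z0 where z0: "S 0 z0 = 0"
    using two[of 0] by (metis (mono_tags) card.empty empty_Collect_eq zero_neq_numeral)
  define T where "T = Sigma (UNIV - {0}) (\<lambda>c. {z. S c z = 0})"
  define slope where "slope p = (snd p - z0) / fst p" for p :: "'a \<times> 'a"
  \<comment> \<open>pigeonhole: the 2(q - 1) > q points of T off the line c = 0 cannot have distinct slopes\<close>
  have "card T = (CARD('a) - 1) * 2"
    by (simp add: T_def card_SigmaI two card_Diff_singleton)
  then have "\<not> inj_on slope T"
    using q card_inj_on_le[of slope T UNIV] by fastforce
  then obtain c1 z1 c2 z2 where pts: "(c1, z1) \<in> T" "(c2, z2) \<in> T" "(c1, z1) \<noteq> (c2, z2)"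
    and same: "slope (c1, z1) = slope (c2, z2)"
    unfolding inj_on_def by auto
  define m where "m = slope (c1, z1)"
  have c: "c1 \<noteq> 0" "c2 \<noteq> 0" "S c1 z1 = 0" "S c2 z2 = 0"
    using pts by (auto simp: T_def)
  then have z: "z1 = z0 + m * c1" "z2 = z0 + m * c2"
    using same by (simp_all add: m_def slope_def field_simps)
  then have "c1 \<noteq> c2"
    using pts same by (auto simp: slope_def field_simps)
  define K1 K2 where "K1 = 2 * m * z0 - u0 * m - u1 * z0 + v1" and "K2 = m\<^sup>2 - u1 * m + v2"
  have S_line: "S c (z0 + m * c) = c * (K1 + K2 * c)" for c
    using z0 by (simp add: S_def K1_def K2_def algebra_simps power2_eq_square)
  have "K1 + K2 * c1 = 0" "K1 + K2 * c2 = 0"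
    using c S_line z by simp_all
  moreover have "K2 * (c1 - c2) = (K1 + K2 * c1) - (K1 + K2 * c2)"
    by (simp add: algebra_simps)
  ultimately have "K2 * (c1 - c2) = 0" by simp
  then have "K2 = 0" "K1 = 0"
    using \<open>c1 \<noteq> c2\<close> \<open>K1 + K2 * c1 = 0\<close> by simp_all
  then show ?thesis using that[of z0 m] S_line by simp
qed

subsection \<open>Slices of a form in the chart x = 1\<close>

text \<open>\<open>slice_coeff d C k\<close> is the coefficient of \<open>z\<^sup>k\<close> in \<open>C(1, c, z)\<close>, as a polynomial in \<open>c\<close>.\<close>

definition slice_coeff :: "nat \<Rightarrow> ('a::comm_ring_1) form3 \<Rightarrow> nat \<Rightarrow> 'a poly" where
  "slice_coeff d C k = (\<Sum>j\<le>d - k. monom (C (d - k - j, j, k)) j)"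

definition slice_poly :: "nat \<Rightarrow> ('a::comm_ring_1) form3 \<Rightarrow> 'a \<Rightarrow> 'a poly" where
  "slice_poly d C c = (\<Sum>k\<le>d. monom (poly (slice_coeff d C k) c) k)"

lemma degree_slice_coeff: "degree (slice_coeff d C k) \<le> d - k"
  by (rule degree_le) (simp add: slice_coeff_def coeff_sum coeff_monom)

lemma coeff_slice_poly:
  "coeff (slice_poly d C c) k = (if k \<le> d then poly (slice_coeff d C k) c else 0)"
  by (simp add: slice_poly_def coeff_sum coeff_monom)

lemma poly_slice_poly:
  assumes C: "homog_form d C"
  shows "poly (slice_poly d C c) z = eval_form d C (1, c, z)"
proof -
  define I where "I = Sigma {..d} (\<lambda>k. {..d - k})"
  define e where "e = (\<lambda>(k, j). (d - k - j, j, k))"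
  have "inj_on e I"
    by (auto simp: inj_on_def e_def I_def)
  have support: "C x \<noteq> 0 \<Longrightarrow> x \<in> e ` I" for x
    using homog_formD[OF C] by (cases x) (force simp: e_def I_def image_iff)
  have "finite I" by (simp add: I_def)
  have "eval_form d C (1, c, z) = (\<Sum>x\<in>e ` I. C x * monom3 x (1, c, z))"
    by (rule eval_form_eq_sum[OF C]) (use \<open>finite I\<close> support in auto)
  also have "\<dots> = (\<Sum>(k, j)\<in>I. C (d - k - j, j, k) * c ^ j * z ^ k)"
    unfolding sum.reindex[OF \<open>inj_on e I\<close>] by (simp add: e_def case_prod_beta mult.assoc)
  also have "\<dots> = poly (slice_poly d C c) z"
    by (simp add: I_def sum.Sigma[symmetric] slice_poly_def slice_coeff_def poly_sum poly_monom
        sum_distrib_right)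
  finally show ?thesis ..
qed

lemma slice_coeff_top:
  assumes C: "homog_form d C"
  shows "slice_coeff d C d = [:eval_form d C (0,0,1):]"
proof -
  have "C x * monom3 x (0,0,1) = (if x = (0,0,d) then C (0,0,d) else 0)" for x
    using homog_formD[OF C, of 0 0] by (cases x) (auto simp: power_0_left)
  then have "eval_form d C (0,0,1) = C (0,0,d)"
    by (simp add: eval_form_atMost)
  then show ?thesis
    by (simp add: slice_coeff_def monom_0)
qed

lemma degree_slice_poly:
  assumes "homog_form d C" "eval_form d C (0,0,1) = 0"
  shows "degree (slice_poly d C c) \<le> d - 1"
proof (rule degree_le, intro allI impI)
  fix i assume "d - 1 < i"
  then have "d < i \<or> i = d" by auto
  then show "coeff (slice_poly d C c) i = 0"
    using slice_coeff_top[OF assms(1)] assms(2) by (auto simp: coeff_slice_poly)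
qed

lemma card_zeros_eq_sum_slices:
  fixes \<phi> :: "('a::{field,finite}) \<times> 'a \<times> 'a \<Rightarrow> 'a"
  assumes "\<phi> (0,0,1) = 0" "\<And>z. \<phi> (0,1,z) \<noteq> 0"
  shows "card {p\<in>P2. \<phi> p = 0} = (\<Sum>c\<in>UNIV. card {z. \<phi> (1,c,z) = 0}) + 1"
proof -
  define A where "A = Sigma UNIV (\<lambda>c. {z. \<phi> (1,c,z) = 0})"
  have "{p\<in>P2. \<phi> p = 0} = insert (0,0,1) ((\<lambda>(c, z). (1, c, z)) ` A)"
    using assms by (auto simp: P2_def A_def)
  moreover have "inj_on (\<lambda>(c, z). (1::'a, c, z)) A"
    by (auto simp: inj_on_def)
  moreover have "(0,0,1) \<notin> (\<lambda>(c, z). (1 :: 'a, c, z)) ` A"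
    by auto
  ultimately have "card {p\<in>P2. \<phi> p = 0} = card A + 1"
    by (simp add: card_image)
  then show ?thesis
    by (simp add: A_def card_SigmaI)
qed

lemma has_linear_factor_if_slice_vanishes:
  fixes \<phi> :: "('a::{field,finite}) \<times> 'a \<times> 'a \<Rightarrow> 'a"
  assumes \<phi>: "is_form d \<phi>" and d: "d < CARD('a)" and "\<phi> (0,0,1) = 0"
    and slice: "\<And>z. \<phi> (1,c,z) = 0"
  shows "has_linear_factor d \<phi>"
proof (rule has_linear_factor_if_vanishes_on_line[OF \<phi> d])
  show "(- c, 1 :: 'a, 0 :: 'a) \<noteq> (0, 0, 0)" by simp
  fix v :: "'a \<times> 'a \<times> 'a" assume "dot3 (- c, 1, 0) v = 0"
  then obtain x z where v: "v = (x, c * x, z)"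
    by (cases v) (auto simp: algebra_simps)
  show "\<phi> v = 0"
  proof (cases "x = 0")
    case True
    then show ?thesis
      using is_form_homogeneous[OF \<phi>, of z 0 0 1] \<open>\<phi> (0,0,1) = 0\<close> by (simp add: v)
  next
    case False
    then show ?thesis
      using is_form_homogeneous[OF \<phi>, of x 1 c "z / x"] slice[of "z / x"] by (simp add: v mult.commute)
  qed
qed

lemma sum_eq_card_times_bound:
  fixes f :: "'a \<Rightarrow> nat"
  assumes "finite A" "\<And>a. a \<in> A \<Longrightarrow> f a \<le> B" "sum f A = card A * B" "a \<in> A"
  shows "f a = B"
proof (rule ccontr)
  assume "f a \<noteq> B"
  then have "sum f A < sum (\<lambda>_. B) A"
    using assms by (intro sum_strict_mono_ex1) (auto simp: le_less)
  then show False using assms(3) by simp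
qed

lemma card_slice_roots_le:
  fixes \<phi> :: "('a::{field,finite}) \<times> 'a \<times> 'a \<Rightarrow> 'a"
  assumes \<phi>: "is_form (CARD('a) - 1) \<phi>" and no_factor: "\<not> has_linear_factor (CARD('a) - 1) \<phi>"
    and e3: "\<phi> (0,0,1) = 0"
  shows "card {z. \<phi> (1,c,z) = 0} \<le> CARD('a) - 2"
proof -
  let ?q = "CARD('a)"
  obtain C where C: "homog_form (?q - 1) C" "\<phi> = eval_form (?q - 1) C"
    using \<phi> unfolding is_form_def by blast
  have "slice_poly (?q - 1) C c \<noteq> 0"
  proof
    assume "slice_poly (?q - 1) C c = 0"
    then have "\<phi> (1,c,z) = 0" for z
      using poly_slice_poly[OF C(1), of c z] by (simp add: C(2))
    moreover have "?q - 1 < ?q" by simp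
    ultimately show False
      using has_linear_factor_if_slice_vanishes[OF \<phi> _ e3] no_factor by blast
  qed
  moreover have "degree (slice_poly (?q - 1) C c) \<le> ?q - 2"
    using degree_slice_poly[OF C(1)] e3 by (simp add: C(2) numeral_2_eq_2)
  ultimately have "card {z. poly (slice_poly (?q - 1) C c) z = 0} \<le> ?q - 2"
    using card_poly_roots_bound le_trans by blast
  then show ?thesis by (simp only: C(2) poly_slice_poly[OF C(1)])
qed

lemma slices_have_two_nonzeros:
  fixes \<phi> :: "('a::{field,finite}) \<times> 'a \<times> 'a \<Rightarrow> 'a"
  assumes q: "CARD('a) \<ge> 3" and \<phi>: "is_form (CARD('a) - 1) \<phi>"
    and card: "card {p\<in>P2. \<phi> p = 0} = (CARD('a) - 1)\<^sup>2"
    and no_factor: "\<not> has_linear_factor (CARD('a) - 1) \<phi>"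
    and at_e3: "\<phi> (0,0,1) = 0" "\<And>z. \<phi> (0,1,z) \<noteq> 0"
  shows "card {z. \<phi> (1,c,z) \<noteq> 0} = 2"
proof -
  let ?q = "CARD('a)"
  define m where "m = ?q - 2"
  have m: "?q = m + 2" using q by (simp add: m_def)
  have "(?q - 1)\<^sup>2 = ?q * (?q - 2) + 1"
    by (simp add: m power2_eq_square algebra_simps)
  then have "(\<Sum>c\<in>UNIV. card {z. \<phi> (1,c,z) = 0}) = card (UNIV :: 'a set) * (?q - 2)"
    using card card_zeros_eq_sum_slices[of \<phi>] at_e3 by simp
  then have "card {z. \<phi> (1,c,z) = 0} = ?q - 2"
    using sum_eq_card_times_bound[of UNIV "\<lambda>c. card {z. \<phi> (1,c,z) = 0}" "?q - 2" c]
      card_slice_roots_le[OF \<phi> no_factor at_e3(1)] by simp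
  moreover have "{z. \<phi> (1,c,z) \<noteq> 0} = UNIV - {z. \<phi> (1,c,z) = 0}" by blast
  ultimately show ?thesis
    using q by (simp add: card_Diff_subset)
qed

lemma slice_recurrence:
  fixes C :: "('a::{field,finite}) form3" and c :: 'a
  defines "b \<equiv> \<lambda>k. poly (slice_coeff (CARD('a) - 1) C k) c"
  assumes C: "homog_form (CARD('a) - 1) C" and top: "eval_form (CARD('a) - 1) C (0,0,1) = 0"
    and two: "card {z. eval_form (CARD('a) - 1) C (1,c,z) \<noteq> 0} = 2"
  obtains U V where "\<And>z. eval_form (CARD('a) - 1) C (1,c,z) \<noteq> 0 \<longleftrightarrow> z\<^sup>2 - U * z + V = 0"
    and "b (CARD('a) - 2) \<noteq> 0"
    and "\<And>n. n + 2 < CARD('a) \<Longrightarrow> V * b (n + 2) - U * b (n + 1) + b n = 0"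
proof -
  define d where "d = CARD('a) - 1"
  note C = C[folded d_def] and top = top[folded d_def] and two = two[folded d_def]
    and b_def = b_def[folded d_def] and that = that[folded d_def]
  define f where "f = slice_poly d C c"
  obtain s1 s2 where s: "{z. eval_form d C (1,c,z) \<noteq> 0} = {s1, s2}" "s1 \<noteq> s2"
    using two by (meson card_2_iff)
  have nonroots: "{z. poly f z \<noteq> 0} = {s1, s2}"
    using s(1) by (simp add: f_def poly_slice_poly[OF C])
  have "degree f \<le> CARD('a) - 2"
    using degree_slice_poly[OF C top] by (simp add: f_def d_def numeral_2_eq_2)
  note f = poly_with_two_nonroots[OF this nonroots s(2)]
  have coeff_f: "coeff f k = b k" if "k \<le> d" for k
    using that by (simp add: f_def b_def coeff_slice_poly)
  show ?thesis
  proof (rule that[of "s1 + s2" "s1 * s2"])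
    show "eval_form d C (1,c,z) \<noteq> 0 \<longleftrightarrow> z\<^sup>2 - (s1 + s2) * z + s1 * s2 = 0" for z
    proof -
      have "z\<^sup>2 - (s1 + s2) * z + s1 * s2 = (z - s1) * (z - s2)"
        by (simp add: power2_eq_square algebra_simps)
      then show ?thesis using s(1) by auto
    qed
    show "b (CARD('a) - 2) \<noteq> 0"
      using f(1) coeff_f[of "CARD('a) - 2"] by (simp add: d_def)
    show "s1 * s2 * b (n + 2) - (s1 + s2) * b (n + 1) + b n = 0" if "n + 2 < CARD('a)" for n
      using f(2)[OF that] coeff_f[of n] coeff_f[of "n + 1"] coeff_f[of "n + 2"] that
      by (simp add: d_def)
  qed
qed

lemma slice_coefficients_recurrence:
  fixes \<phi> :: "('a::{field,finite}) \<times> 'a \<times> 'a \<Rightarrow> 'a"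
  assumes q: "CARD('a) \<ge> 3" and \<phi>: "is_form (CARD('a) - 1) \<phi>"
    and card: "card {p\<in>P2. \<phi> p = 0} = (CARD('a) - 1)\<^sup>2"
    and no_factor: "\<not> has_linear_factor (CARD('a) - 1) \<phi>"
    and at_e3: "\<phi> (0,0,1) = 0" "\<And>z. \<phi> (0,1,z) \<noteq> 0"
  obtains B :: "nat \<Rightarrow> 'a poly" and U V :: "'a \<Rightarrow> 'a" and \<alpha> :: 'a
  where "\<And>c z. \<phi> (1,c,z) \<noteq> 0 \<longleftrightarrow> z\<^sup>2 - U c * z + V c = 0"
    and "\<And>k. degree (B k) \<le> CARD('a) - 1 - k"
    and "B (CARD('a) - 1) = 0" and "B (CARD('a) - 2) = [:\<alpha>:]" and "\<alpha> \<noteq> 0"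
    and "\<And>c n. n + 2 < CARD('a) \<Longrightarrow>
      V c * poly (B (n + 2)) c - U c * poly (B (n + 1)) c + poly (B n) c = 0"
proof -
  obtain C where C: "homog_form (CARD('a) - 1) C" and \<phi>_C: "\<phi> = eval_form (CARD('a) - 1) C"
    using \<phi> unfolding is_form_def by blast
  define B where "B = slice_coeff (CARD('a) - 1) C"
  have "\<forall>c. \<exists>U V. (\<forall>z. \<phi> (1,c,z) \<noteq> 0 \<longleftrightarrow> z\<^sup>2 - U * z + V = 0) \<and> poly (B (CARD('a) - 2)) c \<noteq> 0
      \<and> (\<forall>n. n + 2 < CARD('a) \<longrightarrow> V * poly (B (n + 2)) c - U * poly (B (n + 1)) c + poly (B n) c = 0)"
    (is "\<forall>c. ?P c")
  proof
    fix c
    have "card {z. eval_form (CARD('a) - 1) C (1,c,z) \<noteq> 0} = 2"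
      using slices_have_two_nonzeros[OF q \<phi> card no_factor at_e3] by (simp add: \<phi>_C)
    moreover have "eval_form (CARD('a) - 1) C (0,0,1) = 0"
      using at_e3(1) by (simp add: \<phi>_C)
    ultimately show "?P c"
      unfolding B_def \<phi>_C using slice_recurrence[OF C] by metis
  qed
  then obtain U V where UV: "\<And>c z. \<phi> (1,c,z) \<noteq> 0 \<longleftrightarrow> z\<^sup>2 - U c * z + V c = 0"
    and lead: "\<And>c. poly (B (CARD('a) - 2)) c \<noteq> 0"
    and rec: "\<And>c n. n + 2 < CARD('a) \<Longrightarrow>
      V c * poly (B (n + 2)) c - U c * poly (B (n + 1)) c + poly (B n) c = 0"
    by metis
  have deg: "degree (B k) \<le> CARD('a) - 1 - k" for k
    unfolding B_def by (rule degree_slice_coeff)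
  have "degree (B (CARD('a) - 2)) \<le> 1"
    using deg[of "CARD('a) - 2"] q by simp
  then have lin: "B (CARD('a) - 2) = [:coeff (B (CARD('a) - 2)) 0:]"
    using linear_poly_without_roots lead by blast
  moreover have "coeff (B (CARD('a) - 2)) 0 \<noteq> 0"
    using lead[of 0] by (subst (asm) lin) simp
  moreover have "B (CARD('a) - 1) = 0"
    using slice_coeff_top[OF C] at_e3(1) by (simp add: B_def \<phi>_C)
  ultimately show ?thesis
    using that[OF UV deg] rec by blast
qed

lemma slices_form_conic:
  fixes \<phi> :: "('a::{field,finite}) \<times> 'a \<times> 'a \<Rightarrow> 'a"
  assumes q: "CARD('a) \<ge> 7" and \<phi>: "is_form (CARD('a) - 1) \<phi>"
    and card: "card {p\<in>P2. \<phi> p = 0} = (CARD('a) - 1)\<^sup>2"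
    and no_factor: "\<not> has_linear_factor (CARD('a) - 1) \<phi>"
    and at_e3: "\<phi> (0,0,1) = 0" "\<And>z. \<phi> (0,1,z) \<noteq> 0"
  obtains u0 u1 v0 v1 v2
  where "\<And>c z. \<phi> (1,c,z) \<noteq> 0 \<longleftrightarrow> z\<^sup>2 - (u0 + u1 * c) * z + (v0 + v1 * c + v2 * c\<^sup>2) = 0"
proof -
  have q3: "CARD('a) \<ge> 3" using q by simp
  obtain B U V \<alpha> where UV: "\<And>c z. \<phi> (1,c,z) \<noteq> 0 \<longleftrightarrow> z\<^sup>2 - U c * z + V c = 0"
    and deg: "\<And>k. degree (B k) \<le> CARD('a) - 1 - k"
    and top: "B (CARD('a) - 1) = 0" and \<alpha>: "B (CARD('a) - 2) = [:\<alpha>:]" "\<alpha> \<noteq> 0"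
    and rec: "\<And>c n. n + 2 < CARD('a) \<Longrightarrow>
      V c * poly (B (n + 2)) c - U c * poly (B (n + 1)) c + poly (B n) c = 0"
    by (rule slice_coefficients_recurrence[OF q3 \<phi> card no_factor at_e3]) blast
  define r where "r = CARD('a) - 6"
  have q_r: "CARD('a) = r + 6" using q by (simp add: r_def)
  note top = top[unfolded q_r, simplified] and \<alpha> = \<alpha>[unfolded q_r, simplified]
    and rec = rec[unfolded q_r] and deg = deg[unfolded q_r]
  obtain u0 u1 v0 v1 v2 where "\<And>c. U c = u0 + u1 * c" "\<And>c. V c = v0 + v1 * c + v2 * c\<^sup>2"
  proof (rule recurrence_coefficients_low_degree[of \<alpha> "B (r + 3)" "B (r + 2)" "B (r + 1)" "B r" U V])
    show "CARD('a) > 6" "\<alpha> \<noteq> 0" using q \<alpha> by auto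
    show "degree (B (r + 3)) \<le> 2" "degree (B (r + 2)) \<le> 3" "degree (B (r + 1)) \<le> 4"
      "degree (B r) \<le> 5"
      using deg[of "r + 3"] deg[of "r + 2"] deg[of "r + 1"] deg[of r] by simp_all
    show "poly (B (r + 3)) c = U c * \<alpha>" for c
      using rec[of "r + 3" c] top \<alpha> by (simp add: algebra_simps numeral_eq_Suc)
    show "poly (B (r + 2)) c = U c * poly (B (r + 3)) c - V c * \<alpha>" for c
      using rec[of "r + 2" c] \<alpha> by (simp add: algebra_simps numeral_eq_Suc)
    show "poly (B (r + 1)) c = U c * poly (B (r + 2)) c - V c * poly (B (r + 3)) c" for c
      using rec[of "r + 1" c] by (simp add: algebra_simps numeral_eq_Suc)
    show "poly (B r) c = U c * poly (B (r + 1)) c - V c * poly (B (r + 2)) c" for c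
      using rec[of r c] by (simp add: algebra_simps numeral_eq_Suc)
  qed blast
  then show ?thesis
    using that UV by metis
qed

subsection \<open>The case of a line with a single point\<close>

lemma meets_every_line_affine_line:
  fixes \<phi> :: "('a::field) \<times> 'a \<times> 'a \<Rightarrow> 'a"
  assumes meets: "meets_every_line \<phi>" and x0: "\<And>z. \<phi> (0,1,z) \<noteq> 0"
  shows "\<exists>c. \<phi> (1, c, z0 + m * c) = 0"
proof -
  have "(z0, m, -1) \<noteq> (0, 0, 0 :: 'a)" by simp
  then obtain p where p: "p \<in> P2" "dot3 (z0, m, -1) p = 0" "\<phi> p = 0"
    using meets unfolding meets_every_line_def by blast
  obtain x y z where pv: "p = (x,y,z)" by (cases p)
  consider "x = 1" | "x = 0" "y = 1" | "x = 0" "y = 0" "z = 1"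
    using p(1) by (auto simp: P2_def pv)
  then show ?thesis
  proof cases
    case 1
    then have "z = z0 + m * y" using p(2) by (simp add: pv algebra_simps)
    then show ?thesis using p(3) 1 by (auto simp: pv)
  next
    case 2
    then show ?thesis using x0 p(3) by (simp add: pv)
  next
    case 3
    then show ?thesis using p(2) by (simp add: pv)
  qed
qed

lemma line_x0_meets_curve_again:
  fixes \<phi> :: "('a::{field,finite}) \<times> 'a \<times> 'a \<Rightarrow> 'a"
  assumes q: "CARD('a) \<ge> 7" and \<phi>: "is_form (CARD('a) - 1) \<phi>"
    and card: "card {p\<in>P2. \<phi> p = 0} = (CARD('a) - 1)\<^sup>2"
    and meets: "meets_every_line \<phi>" and no_factor: "\<not> has_linear_factor (CARD('a) - 1) \<phi>"
    and e3: "\<phi> (0,0,1) = 0"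
  shows "\<exists>z. \<phi> (0,1,z) = 0"
proof (rule ccontr)
  assume "\<nexists>z. \<phi> (0,1,z) = 0"
  then have x0: "\<And>z. \<phi> (0,1,z) \<noteq> 0" by blast
  obtain u0 u1 v0 v1 v2
    where conic: "\<And>c z. \<phi> (1,c,z) \<noteq> 0 \<longleftrightarrow> z\<^sup>2 - (u0 + u1 * c) * z + (v0 + v1 * c + v2 * c\<^sup>2) = 0"
    using slices_form_conic[OF q \<phi> card no_factor e3 x0] by blast
  have q3: "CARD('a) \<ge> 3" using q by simp
  have "card {z. z\<^sup>2 - (u0 + u1 * c) * z + (v0 + v1 * c + v2 * c\<^sup>2) = 0} = 2" for c
    using slices_have_two_nonzeros[OF q3 \<phi> card no_factor e3 x0] by (simp add: conic)
  then obtain z0 m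
    where "\<And>c. (z0 + m * c)\<^sup>2 - (u0 + u1 * c) * (z0 + m * c) + (v0 + v1 * c + v2 * c\<^sup>2) = 0"
    using conic_contains_line[OF q3] by blast
  then have "\<And>c. \<phi> (1, c, z0 + m * c) \<noteq> 0"
    using conic by blast
  then show False
    using meets_every_line_affine_line[OF meets x0] by blast
qed

lemma meets_every_line_if_lines_meet:
  fixes F :: "('a::field) form3"
  assumes nonempty: "\<And>l. l \<in> lines2 \<Longrightarrow> {p \<in> rat_points d F. on_line l p} \<noteq> {}"
  shows "meets_every_line (eval_form d F)"
  unfolding meets_every_line_def
proof (intro allI impI)
  fix L :: "'a \<times> 'a \<times> 'a" assume "L \<noteq> (0,0,0)"
  then have "proj_rep L \<in> lines2"
    by (simp add: lines2_def proj_rep_in_P2)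
  then obtain p where "p \<in> rat_points d F" "on_line (proj_rep L) p"
    using nonempty by blast
  moreover obtain s where "s \<noteq> 0" "proj_rep L = smult3 s L"
    using proj_rep_eq_smult3 by blast
  ultimately have "s * dot3 L p = 0"
    by (cases L; cases p) (simp add: on_line_def algebra_simps)
  then show "\<exists>p\<in>P2. dot3 L p = 0 \<and> eval_form d F p = 0"
    using \<open>s \<noteq> 0\<close> \<open>p \<in> rat_points d F\<close> by (auto simp: rat_points_def)
qed

lemma k0_eq_oneD:
  fixes F :: "('a::{field,finite}) form3"
  assumes "k0 d F = 1"
  shows "\<exists>l\<in>lines2. \<exists>P. {p \<in> rat_points d F. on_line l p} = {P}"
    and "meets_every_line (eval_form d F)"
proof -
  define count where "count l = card {p \<in> rat_points d F. on_line l p}" for l :: "'a \<times> 'a \<times> 'a"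
  define S where "S = {i \<in> {0..CARD('a) + 1}. a_count d F i \<noteq> 0}"
  have a_count: "a_count d F i \<noteq> 0 \<longleftrightarrow> (\<exists>l\<in>lines2. count l = i)" for i
    by (auto simp: a_count_def count_def card_eq_0_iff)
  have "count (1,0,0) \<le> card (insert (0,0,1) (range (\<lambda>z::'a. (0::'a, 1::'a, z))))"
    unfolding count_def by (rule card_mono) (auto simp: rat_points_def P2_def on_line_def)
  also have "\<dots> \<le> card (range (\<lambda>z::'a. (0::'a, 1::'a, z))) + 1"
    by (simp add: card_insert_if)
  also have "\<dots> \<le> CARD('a) + 1"
    using card_image_le[of UNIV "\<lambda>z::'a. (0::'a, 1::'a, z)"] by simp
  finally have "count (1,0,0) \<in> S"
    unfolding S_def using a_count by (auto simp: lines2_def P2_def)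
  \<comment> \<open>so \<open>S\<close> is nonempty and \<open>Min S\<close> is not a junk value\<close>
  then have "finite S" "S \<noteq> {}" by (auto simp: S_def)
  then have "Min S \<in> S" "\<And>i. i \<in> S \<Longrightarrow> Min S \<le> i"
    by (simp_all add: Min_in)
  moreover have "Min S = 1"
    using assms by (simp add: k0_def S_def)
  ultimately have "1 \<in> S" "0 \<notin> S" by auto
  then show "\<exists>l\<in>lines2. \<exists>P. {p \<in> rat_points d F. on_line l p} = {P}"
    unfolding S_def a_count count_def by (auto simp: card_1_singleton_iff)
  show "meets_every_line (eval_form d F)"
    using \<open>0 \<notin> S\<close> unfolding S_def a_count count_def
    by (intro meets_every_line_if_lines_meet) auto
qed

theorem proposition3p15:
  fixes F :: "('a::{field,finite}) form3"
  assumes "CARD('a) \<ge> 7"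
    and "homog_form (CARD('a) - 1) F" and "F \<noteq> (\<lambda>_. 0)"
    and "\<not> has_lin_component (CARD('a) - 1) F"
    and "Nq (CARD('a) - 1) F = (CARD('a) - 1)^2"
    and "k0 (CARD('a) - 1) F \<noteq> 0"
  shows "k0 (CARD('a) - 1) F \<ge> 2"
proof (rule ccontr)
  assume "\<not> k0 (CARD('a) - 1) F \<ge> 2"
  then have k0: "k0 (CARD('a) - 1) F = 1" using assms(6) by simp
  obtain l P where l: "l \<in> lines2" and single: "{p \<in> rat_points (CARD('a) - 1) F. on_line l p} = {P}"
    using k0_eq_oneD(1)[OF k0] by blast
  have d: "1 \<le> CARD('a) - 1" "CARD('a) - 1 < CARD('a)" using assms(1) by simp_all
  obtain \<phi> :: "'a \<times> 'a \<times> 'a \<Rightarrow> 'a" where \<phi>: "is_form (CARD('a) - 1) \<phi>"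
    and card: "card {p\<in>P2. \<phi> p = 0} = Nq (CARD('a) - 1) F" and meets: "meets_every_line \<phi>"
    and "\<not> has_linear_factor (CARD('a) - 1) \<phi>" "\<phi> (0,0,1) = 0" "\<And>z. \<phi> (0,1,z) \<noteq> 0"
    using normalize_line_with_single_point[OF assms(2) d assms(4) k0_eq_oneD(2)[OF k0] l single]
    by blast
  then show False
    using line_x0_meets_curve_again[OF assms(1) \<phi> card[unfolded assms(5)] meets] by blast
qed

end
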